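(* Let $\mu, t \in \mathbb{R}$, $\sigma>0$, $\lambda>0$ with $\lambda \ge (\mu-t)_-$. Let $\mathcal{L}_{\lambda}(\mu,\sigma)$ be the set of all probability distributions $F$ on $\mathbb{R}$ such that, for $X\sim F$, $\mathbb{E}^F[X]=\mu$, $\mathbb{E}^F[X^2]=\mu^2+\sigma^2$, and $\mathbb{E}^F[(X-t)_-]\le \lambda$. Then \[ \sup_{F \in \mathcal{L}_{\lambda}(\mu, \sigma)} \mathbb{E}^{F}[(X-t)^2_+] = \begin{cases} \sigma^2 + (\mu-t)_+^2, & \lambda > (\mu-t)_-, \\ 0, & \lambda=(\mu-t)_-. \end{cases} \]
   Context: For $x\in\mathbb{R}$, $(x)_+=\max\{x,0\}$ and $(x)_-=\max\{-x,0\}$. $\mathbb{E}^F$ denotes expectation when $X$ has distribution $F$. *)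

theory Defs
  imports "HOL-Probability.Probability"
begin

definition pos_part :: "real \<Rightarrow> real" where
  "pos_part x = max x 0"

definition neg_part :: "real \<Rightarrow> real" where
  "neg_part x = max (- x) 0"

definition Lclass :: "real \<Rightarrow> real \<Rightarrow> real \<Rightarrow> real \<Rightarrow> real measure set" where
  "Lclass lam mu sig t =
     {F. prob_space F \<and> sets F = sets borel \<and>
         integrable F (\<lambda>x. x) \<and> integrable F (\<lambda>x. x ^ 2) \<and>
         (\<integral>x. x \<partial>F) = mu \<and>
         (\<integral>x. x ^ 2 \<partial>F) = mu ^ 2 + sig ^ 2 \<and>
         (\<integral>x. neg_part (x - t) \<partial>F) \<le> lam}"

end

theory Submission
  imports Defs
begin

text \<open>Write \<open>f = x - t\<close>. Since \<open>f\<^sub>+\<^sup>2 + f\<^sub>-\<^sup>2 = f\<^sup>2\<close>, every F in the class has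
  \<open>E f\<^sub>+\<^sup>2 = (mu - t)\<^sup>2 + sig\<^sup>2 - E f\<^sub>-\<^sup>2\<close>, and
  \<open>E f\<^sub>-\<^sup>2 \<ge> (E f\<^sub>-)\<^sup>2 \<ge> (mu - t)\<^sub>-\<^sup>2\<close>; this is the upper bound. If \<open>lam = (mu - t)\<^sub>- > 0\<close>,
  then \<open>E f\<^sub>- = t - mu\<close> forces \<open>E f\<^sub>+ = 0\<close>, so \<open>f\<^sub>+ = 0\<close> almost surely.
  The bound is approached by the two-point laws with atoms \<open>mu + sig / s\<close> and \<open>mu - sig * s\<close>
  in odds \<open>s\<^sup>2 : 1\<close>: they have mean mu and variance \<open>sig\<^sup>2\<close>, and for small s the upper atom
  lies above t, so \<open>f\<^sub>-\<close> is at most \<open>(mu - t)\<^sub>- + sig * s\<close>. Hence they belong to the class and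
  \<open>E f\<^sub>+\<^sup>2 \<ge> (mu - t)\<^sup>2 + sig\<^sup>2 - ((mu - t)\<^sub>- + sig * s)\<^sup>2\<close>. In the boundary case the
  law with \<open>s = sig / (t - mu)\<close> shows that the class is not empty.\<close>

lemma pos_part_nonneg [simp]: "0 \<le> pos_part x"
  and neg_part_nonneg [simp]: "0 \<le> neg_part x"
  and pos_part_minus_neg_part [simp]: "pos_part x - neg_part x = x"
  and pos_part_sq_plus_neg_part_sq [simp]: "(pos_part x)\<^sup>2 + (neg_part x)\<^sup>2 = x\<^sup>2"
  by (auto simp: pos_part_def neg_part_def max_def power2_eq_square)

lemma pos_part_sq_le: "(pos_part x)\<^sup>2 \<le> x\<^sup>2"
  and neg_part_sq_le: "(neg_part x)\<^sup>2 \<le> x\<^sup>2"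
  using pos_part_sq_plus_neg_part_sq[of x] zero_le_power2[of "pos_part x"]
    zero_le_power2[of "neg_part x"] by linarith+

lemma neg_part_le_iff: "neg_part x \<le> c \<longleftrightarrow> - x \<le> c \<and> 0 \<le> c"
  by (simp add: neg_part_def)

lemma borel_measurable_pos_part [measurable]: "pos_part \<in> borel_measurable borel"
  and borel_measurable_neg_part [measurable]: "neg_part \<in> borel_measurable borel"
  unfolding pos_part_def[abs_def] neg_part_def[abs_def] by measurable

context prob_space
begin

lemma integrable_pos_part: "integrable M f \<Longrightarrow> integrable M (\<lambda>x. pos_part (f x))"
  and integrable_neg_part: "integrable M f \<Longrightarrow> integrable M (\<lambda>x. neg_part (f x))"
  unfolding pos_part_def neg_part_def by auto

lemma integrable_pos_part_sq:
  assumes "f \<in> borel_measurable M" "integrable M (\<lambda>x. (f x)\<^sup>2)"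
  shows "integrable M (\<lambda>x. (pos_part (f x))\<^sup>2)"
  using assms(2) by (rule Bochner_Integration.integrable_bound) (use assms(1) pos_part_sq_le in auto)

lemma integrable_neg_part_sq:
  assumes "f \<in> borel_measurable M" "integrable M (\<lambda>x. (f x)\<^sup>2)"
  shows "integrable M (\<lambda>x. (neg_part (f x))\<^sup>2)"
  using assms(2) by (rule Bochner_Integration.integrable_bound) (use assms(1) neg_part_sq_le in auto)

lemma expectation_pos_part_minus_neg_part:
  assumes "integrable M f"
  shows "expectation (\<lambda>x. pos_part (f x)) - expectation (\<lambda>x. neg_part (f x)) = expectation f"
  using assms by (simp add: integrable_pos_part integrable_neg_part flip: Bochner_Integration.integral_diff)

lemma neg_part_expectation_le:
  assumes "integrable M f"
  shows "neg_part (expectation f) \<le> expectation (\<lambda>x. neg_part (f x))"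
proof -
  have "- expectation f = expectation (\<lambda>x. - f x)"
    by simp
  also have "\<dots> \<le> expectation (\<lambda>x. neg_part (f x))"
    using assms by (intro integral_mono) (auto simp: integrable_neg_part neg_part_def)
  finally show ?thesis
    by (simp add: neg_part_le_iff)
qed

lemma square_expectation_le:
  fixes f :: "'a \<Rightarrow> real"
  assumes "integrable M f" "integrable M (\<lambda>x. (f x)\<^sup>2)"
  shows "(expectation f)\<^sup>2 \<le> expectation (\<lambda>x. (f x)\<^sup>2)"
  using assms variance_eq[of f] variance_positive[of f] by simp

lemma expectation_pos_part_sq:
  assumes "f \<in> borel_measurable M" "integrable M (\<lambda>x. (f x)\<^sup>2)"
  shows "expectation (\<lambda>x. (pos_part (f x))\<^sup>2) =
    expectation (\<lambda>x. (f x)\<^sup>2) - expectation (\<lambda>x. (neg_part (f x))\<^sup>2)"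
proof -
  have "expectation (\<lambda>x. (pos_part (f x))\<^sup>2) + expectation (\<lambda>x. (neg_part (f x))\<^sup>2) =
      expectation (\<lambda>x. (pos_part (f x))\<^sup>2 + (neg_part (f x))\<^sup>2)"
    using assms by (intro Bochner_Integration.integral_add[symmetric]
        integrable_pos_part_sq integrable_neg_part_sq)
  then show ?thesis
    by simp
qed

lemma expectation_pos_part_sq_le:
  assumes f: "integrable M f" and f2: "integrable M (\<lambda>x. (f x)\<^sup>2)"
  shows "expectation (\<lambda>x. (pos_part (f x))\<^sup>2) \<le>
    expectation (\<lambda>x. (f x)\<^sup>2) - (neg_part (expectation f))\<^sup>2"
proof -
  have "(neg_part (expectation f))\<^sup>2 \<le> (expectation (\<lambda>x. neg_part (f x)))\<^sup>2"
    using neg_part_expectation_le[OF f] by (simp add: power_mono)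
  also have "\<dots> \<le> expectation (\<lambda>x. (neg_part (f x))\<^sup>2)"
    using f f2 by (intro square_expectation_le integrable_neg_part integrable_neg_part_sq) auto
  finally show ?thesis
    using f f2 by (simp add: expectation_pos_part_sq)
qed

lemma expectation_pos_part_sq_eq_0:
  assumes f: "integrable M f" and "expectation f \<le> 0"
    and "expectation (\<lambda>x. neg_part (f x)) \<le> neg_part (expectation f)"
  shows "expectation (\<lambda>x. (pos_part (f x))\<^sup>2) = 0"
proof -
  have "expectation (\<lambda>x. pos_part (f x)) \<le> 0"
    using assms expectation_pos_part_minus_neg_part[OF f] by (simp add: neg_part_def)
  then have "AE x in M. pos_part (f x) = 0"
    using integral_nonneg_eq_0_iff_AE[OF integrable_pos_part[OF f]] by (simp add: eq_iff)
  then have "expectation (\<lambda>x. (pos_part (f x))\<^sup>2) = expectation (\<lambda>x. 0)"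
    using f by (intro integral_cong_AE) auto
  then show ?thesis
    by simp
qed

end

lemma prob_space_Lclass: "F \<in> Lclass lam mu sig t \<Longrightarrow> prob_space F"
  by (simp add: Lclass_def)

lemma Lclass_shifted_moments:
  assumes "F \<in> Lclass lam mu sig t"
  shows "integrable F (\<lambda>x. x - c)" "integrable F (\<lambda>x. (x - c)\<^sup>2)"
    "(\<integral>x. x - c \<partial>F) = mu - c" "(\<integral>x. (x - c)\<^sup>2 \<partial>F) = (mu - c)\<^sup>2 + sig\<^sup>2"
proof -
  note F = assms[unfolded Lclass_def mem_Collect_eq]
  interpret prob_space F
    using F by simp
  have sq: "(\<lambda>x. (x - c)\<^sup>2) = (\<lambda>x. x\<^sup>2 - 2 * c * x + c\<^sup>2)"
    by (simp add: power2_diff fun_eq_iff algebra_simps)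
  show "integrable F (\<lambda>x. x - c)" "(\<integral>x. x - c \<partial>F) = mu - c"
    using F by (auto simp: prob_space)
  show "integrable F (\<lambda>x. (x - c)\<^sup>2)"
    using F unfolding sq by auto
  show "(\<integral>x. (x - c)\<^sup>2 \<partial>F) = (mu - c)\<^sup>2 + sig\<^sup>2"
    using F unfolding sq by (simp add: prob_space power2_diff)
qed

lemma Lclass_pos_part_sq_le:
  assumes "F \<in> Lclass lam mu sig t"
  shows "(\<integral>x. (pos_part (x - t))\<^sup>2 \<partial>F) \<le> sig\<^sup>2 + (pos_part (mu - t))\<^sup>2"
proof -
  note moments = Lclass_shifted_moments[OF assms, where c=t]
  interpret prob_space F
    using assms by (rule prob_space_Lclass)
  have "(\<integral>x. (pos_part (x - t))\<^sup>2 \<partial>F) \<le> (mu - t)\<^sup>2 + sig\<^sup>2 - (neg_part (mu - t))\<^sup>2"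
    using expectation_pos_part_sq_le[OF moments(1,2)] by (simp add: moments(3,4))
  then show ?thesis
    using pos_part_sq_plus_neg_part_sq[of "mu - t"] by linarith
qed

lemma Lclass_pos_part_sq_eq_0:
  assumes "F \<in> Lclass lam mu sig t" "0 < lam" "lam \<le> neg_part (mu - t)"
  shows "(\<integral>x. (pos_part (x - t))\<^sup>2 \<partial>F) = 0"
proof -
  note moments = Lclass_shifted_moments[OF assms(1), where c=t]
  interpret prob_space F
    using assms(1) by (rule prob_space_Lclass)
  have "mu - t \<le> 0"
    using assms(2,3) by (auto simp: neg_part_def)
  moreover have "(\<integral>x. neg_part (x - t) \<partial>F) \<le> neg_part (mu - t)"
    using assms(1,3) by (simp add: Lclass_def)
  ultimately show ?thesis
    using expectation_pos_part_sq_eq_0[OF moments(1)] by (simp add: moments(3))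
qed

definition two_point :: "real \<Rightarrow> real \<Rightarrow> real \<Rightarrow> real measure" where
  "two_point p a b = distr (measure_pmf (bernoulli_pmf p)) borel (\<lambda>c. if c then a else b)"

lemma measurable_two_point_atoms [measurable]:
  "(\<lambda>c. if c then a else b) \<in> measurable (measure_pmf (bernoulli_pmf p)) (borel :: real measure)"
  by simp

lemma prob_space_two_point: "prob_space (two_point p a b)"
  unfolding two_point_def
  by (rule prob_space.prob_space_distr[OF prob_space_measure_pmf measurable_two_point_atoms])

lemma sets_two_point [simp, measurable_cong]: "sets (two_point p a b) = sets borel"
  by (simp add: two_point_def)

lemma integrable_two_point:
  "f \<in> borel_measurable borel \<Longrightarrow> integrable (two_point p a b) (f :: real \<Rightarrow> real)"
  unfolding two_point_def
  using integrable_distr_eq[OF measurable_two_point_atoms] by (simp add: integrable_measure_pmf_finite)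

lemma integral_two_point:
  assumes "0 \<le> p" "p \<le> 1" "f \<in> borel_measurable borel"
  shows "(\<integral>x. f x \<partial>two_point p a b) = p * f a + (1 - p) * (f b :: real)"
  unfolding two_point_def
  using integral_distr[OF measurable_two_point_atoms assms(3)] assms(1,2) by simp

definition mean_var_two_point :: "real \<Rightarrow> real \<Rightarrow> real \<Rightarrow> real measure" where
  "mean_var_two_point mu sig s = two_point (s\<^sup>2 / (1 + s\<^sup>2)) (mu + sig / s) (mu - sig * s)"

lemma sets_mean_var_two_point [simp, measurable_cong]:
  "sets (mean_var_two_point mu sig s) = sets borel"
  by (simp add: mean_var_two_point_def)

lemma integral_mean_var_two_point:
  assumes "0 < s" "f \<in> borel_measurable borel"
  shows "(\<integral>x. f x \<partial>mean_var_two_point mu sig s) =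
    (s\<^sup>2 * f (mu + sig / s) + f (mu - sig * s)) / (1 + s\<^sup>2)"
proof -
  have pos: "0 < 1 + s\<^sup>2"
    by (simp add: add_pos_nonneg)
  then have "1 - s\<^sup>2 / (1 + s\<^sup>2) = 1 / (1 + s\<^sup>2)" "s\<^sup>2 / (1 + s\<^sup>2) \<le> 1"
    by (simp_all add: field_simps)
  then show ?thesis
    using assms pos unfolding mean_var_two_point_def
    by (subst integral_two_point) (auto simp: add_divide_distrib)
qed

lemma mean_var_two_point_moments:
  fixes mu sig s :: real
  assumes "0 < s"
  shows "(s\<^sup>2 * (mu + sig / s) + (mu - sig * s)) / (1 + s\<^sup>2) = mu"
    and "(s\<^sup>2 * (mu + sig / s)\<^sup>2 + (mu - sig * s)\<^sup>2) / (1 + s\<^sup>2) = mu\<^sup>2 + sig\<^sup>2"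
proof -
  have pos: "0 < 1 + s\<^sup>2"
    by (simp add: add_pos_nonneg)
  have "s\<^sup>2 * (mu + sig / s) + (mu - sig * s) = mu * (1 + s\<^sup>2)"
    using assms by (simp add: field_simps power2_eq_square)
  then show "(s\<^sup>2 * (mu + sig / s) + (mu - sig * s)) / (1 + s\<^sup>2) = mu"
    using pos by simp
  have "s\<^sup>2 * (mu + sig / s)\<^sup>2 = (mu * s + sig)\<^sup>2"
    using assms by (simp add: field_simps power2_eq_square)
  then have "s\<^sup>2 * (mu + sig / s)\<^sup>2 + (mu - sig * s)\<^sup>2 = (mu\<^sup>2 + sig\<^sup>2) * (1 + s\<^sup>2)"
    by (simp add: power2_eq_square algebra_simps)
  then show "(s\<^sup>2 * (mu + sig / s)\<^sup>2 + (mu - sig * s)\<^sup>2) / (1 + s\<^sup>2) = mu\<^sup>2 + sig\<^sup>2"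
    using pos by simp
qed

lemma neg_part_mean_var_two_point_atoms:
  assumes "0 < s" "neg_part (mu - t) * s \<le> sig"
  shows "neg_part (mu + sig / s - t) = 0"
    and "neg_part (mu - sig * s - t) \<le> neg_part (mu - t) + sig * s"
proof -
  have "(t - mu) * s \<le> neg_part (mu - t) * s"
    using assms(1) by (intro mult_right_mono) (auto simp: neg_part_def)
  then have "(t - mu) * s \<le> sig"
    using assms(2) by linarith
  then have "t - mu \<le> sig / s"
    using assms(1) by (simp add: le_divide_eq)
  then show "neg_part (mu + sig / s - t) = 0"
    by (simp add: neg_part_def)
  have "0 \<le> sig * s"
    using assms by (simp add: zero_le_mult_iff order_trans[OF _ assms(2)])
  then show "neg_part (mu - sig * s - t) \<le> neg_part (mu - t) + sig * s"
    by (simp add: neg_part_def)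
qed

lemma mean_var_two_point_in_Lclass:
  assumes s: "0 < s" "neg_part (mu - t) * s \<le> sig"
    and lam: "(neg_part (mu - t) + sig * s) / (1 + s\<^sup>2) \<le> lam"
  shows "mean_var_two_point mu sig s \<in> Lclass lam mu sig t"
proof -
  let ?D = "mean_var_two_point mu sig s"
  have "(\<integral>x. neg_part (x - t) \<partial>?D) = neg_part (mu - sig * s - t) / (1 + s\<^sup>2)"
    using s by (simp add: integral_mean_var_two_point neg_part_mean_var_two_point_atoms)
  also have "\<dots> \<le> (neg_part (mu - t) + sig * s) / (1 + s\<^sup>2)"
    using neg_part_mean_var_two_point_atoms(2)[OF s] by (simp add: add_pos_nonneg divide_right_mono)
  finally have "(\<integral>x. neg_part (x - t) \<partial>?D) \<le> lam"
    using lam by linarith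
  moreover have "prob_space ?D" "sets ?D = sets borel"
    "integrable ?D (\<lambda>x. x)" "integrable ?D (\<lambda>x. x\<^sup>2)"
    unfolding mean_var_two_point_def by (simp_all add: prob_space_two_point integrable_two_point)
  moreover have "(\<integral>x. x \<partial>?D) = mu" "(\<integral>x. x\<^sup>2 \<partial>?D) = mu\<^sup>2 + sig\<^sup>2"
    using integral_mean_var_two_point[OF s(1), of "\<lambda>x. x"]
      integral_mean_var_two_point[OF s(1), of "\<lambda>x. x\<^sup>2"] mean_var_two_point_moments[OF s(1)]
    by simp_all
  ultimately show ?thesis
    unfolding Lclass_def mem_Collect_eq by (intro conjI)
qed

lemma mean_var_two_point_pos_part_sq_ge:
  assumes s: "0 < s" "neg_part (mu - t) * s \<le> sig"
  shows "(mu - t)\<^sup>2 + sig\<^sup>2 - (neg_part (mu - t) + sig * s)\<^sup>2 \<le>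
    (\<integral>x. (pos_part (x - t))\<^sup>2 \<partial>mean_var_two_point mu sig s)"
proof -
  let ?D = "mean_var_two_point mu sig s"
  interpret prob_space ?D
    unfolding mean_var_two_point_def by (rule prob_space_two_point)
  have integrable: "integrable ?D (\<lambda>x. (x - t)\<^sup>2)"
    unfolding mean_var_two_point_def by (simp add: integrable_two_point)
  have atoms: "mu - t + sig / s = mu + sig / s - t" "mu - t - sig * s = mu - sig * s - t"
    by simp_all
  have "(\<integral>x. (x - t)\<^sup>2 \<partial>?D) = (mu - t)\<^sup>2 + sig\<^sup>2"
    using mean_var_two_point_moments(2)[OF s(1), of "mu - t" sig]
    by (simp add: integral_mean_var_two_point[OF s(1)] atoms)
  moreover have "(\<integral>x. (neg_part (x - t))\<^sup>2 \<partial>?D) \<le> (neg_part (mu - t) + sig * s)\<^sup>2"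
  proof -
    have "(\<integral>x. (neg_part (x - t))\<^sup>2 \<partial>?D) = (neg_part (mu - sig * s - t))\<^sup>2 / (1 + s\<^sup>2)"
      using s by (simp add: integral_mean_var_two_point neg_part_mean_var_two_point_atoms)
    also have "\<dots> \<le> (neg_part (mu - sig * s - t))\<^sup>2"
      by (simp add: divide_le_eq add_pos_nonneg mult_le_cancel_left1)
    also have "\<dots> \<le> (neg_part (mu - t) + sig * s)\<^sup>2"
      using neg_part_mean_var_two_point_atoms(2)[OF s] by (simp add: power_mono)
    finally show ?thesis .
  qed
  moreover have "(\<integral>x. (pos_part (x - t))\<^sup>2 \<partial>?D) =
      (\<integral>x. (x - t)\<^sup>2 \<partial>?D) - (\<integral>x. (neg_part (x - t))\<^sup>2 \<partial>?D)"
    using integrable by (intro expectation_pos_part_sq) simp_all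
  ultimately show ?thesis
    by linarith
qed

lemma eventually_mean_var_two_point_in_Lclass:
  assumes sig: "0 < sig" and lam: "neg_part (mu - t) < lam"
  shows "\<forall>\<^sub>F s in at_right 0. mean_var_two_point mu sig s \<in> Lclass lam mu sig t \<and>
    (mu - t)\<^sup>2 + sig\<^sup>2 - (neg_part (mu - t) + sig * s)\<^sup>2 \<le>
      (\<integral>x. (pos_part (x - t))\<^sup>2 \<partial>mean_var_two_point mu sig s)"
proof -
  define n where "n = neg_part (mu - t)"
  have "((\<lambda>s. n * s) \<longlongrightarrow> 0) (at_right 0)" "((\<lambda>s. sig * s) \<longlongrightarrow> 0) (at_right (0::real))"
    by (auto intro!: tendsto_eq_intros)
  then have "\<forall>\<^sub>F s in at_right 0. n * s < sig" "\<forall>\<^sub>F s in at_right 0. sig * s < lam - n"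
    using sig lam unfolding n_def by (auto intro: order_tendstoD(2))
  then have "\<forall>\<^sub>F s in at_right 0. 0 < s \<and> n * s < sig \<and> sig * s < lam - n"
    using eventually_at_right_less[of 0] by (auto intro: eventually_conj)
  then show ?thesis
  proof eventually_elim
    case (elim s)
    have "0 \<le> n + sig * s"
      using elim sig by (simp add: n_def add_nonneg_nonneg)
    then have "(n + sig * s) / (1 + s\<^sup>2) \<le> n + sig * s"
      by (simp add: divide_le_eq add_pos_nonneg mult_le_cancel_left1)
    then show ?case
      using elim mean_var_two_point_pos_part_sq_ge[of s mu t sig]
      by (auto simp: n_def intro: mean_var_two_point_in_Lclass)
  qed
qed

lemma Lclass_SUP_pos_part_sq_ge:
  assumes "0 < sig" "neg_part (mu - t) < lam"
  shows "ereal (sig\<^sup>2 + (pos_part (mu - t))\<^sup>2) \<le>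
    (SUP F \<in> Lclass lam mu sig t. ereal (\<integral>x. (pos_part (x - t))\<^sup>2 \<partial>F))" (is "_ \<le> ?S")
proof -
  define g where "g s = (mu - t)\<^sup>2 + sig\<^sup>2 - (neg_part (mu - t) + sig * s)\<^sup>2" for s
  have "g 0 = (mu - t)\<^sup>2 + sig\<^sup>2 - (neg_part (mu - t))\<^sup>2"
    by (simp add: g_def)
  then have "g 0 = sig\<^sup>2 + (pos_part (mu - t))\<^sup>2"
    using pos_part_sq_plus_neg_part_sq[of "mu - t"] by linarith
  moreover have "((\<lambda>s. ereal (g s)) \<longlongrightarrow> ereal (g 0)) (at_right 0)"
    unfolding g_def by (intro tendsto_intros)
  moreover have "\<forall>\<^sub>F s in at_right 0. ereal (g s) \<le> ?S"
    using eventually_mean_var_two_point_in_Lclass[OF assms]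
  proof eventually_elim
    case (elim s)
    then show ?case
      unfolding g_def by (force intro: SUP_upper2)
  qed
  ultimately show ?thesis
    using tendsto_upperbound[OF _ _ trivial_limit_at_right_real] by metis
qed

lemma mean_var_two_point_in_Lclass_boundary:
  assumes "0 < sig" "mu < t"
  shows "mean_var_two_point mu sig (sig / (t - mu)) \<in> Lclass (neg_part (mu - t)) mu sig t"
proof -
  define s where "s = sig / (t - mu)"
  have n: "neg_part (mu - t) = t - mu"
    using assms by (simp add: neg_part_def)
  have "sig * s = (t - mu) * s\<^sup>2"
    using assms by (simp add: s_def power2_eq_square)
  then have "t - mu + sig * s = (t - mu) * (1 + s\<^sup>2)"
    by (simp add: algebra_simps)
  then have "(neg_part (mu - t) + sig * s) / (1 + s\<^sup>2) = neg_part (mu - t)"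
    unfolding n using add_pos_nonneg[of 1 "s\<^sup>2"] by simp
  moreover have "0 < s" "neg_part (mu - t) * s \<le> sig"
    using assms n by (simp_all add: s_def)
  ultimately show ?thesis
    unfolding s_def[symmetric] by (intro mean_var_two_point_in_Lclass) simp_all
qed

theorem theorem2:
  fixes mu t sig lam :: real
  assumes "sig > 0" and "lam > 0" and "lam \<ge> neg_part (mu - t)"
  shows "(SUP F \<in> Lclass lam mu sig t. ereal (\<integral>x. (pos_part (x - t)) ^ 2 \<partial>F))
         = ereal (if lam > neg_part (mu - t) then sig ^ 2 + (pos_part (mu - t)) ^ 2 else 0)"
proof (cases "lam > neg_part (mu - t)")
  case True
  have "(SUP F \<in> Lclass lam mu sig t. ereal (\<integral>x. (pos_part (x - t))\<^sup>2 \<partial>F))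
      \<le> ereal (sig\<^sup>2 + (pos_part (mu - t))\<^sup>2)"
    by (rule SUP_least) (simp add: Lclass_pos_part_sq_le)
  with Lclass_SUP_pos_part_sq_ge[OF assms(1) True] True show ?thesis
    by simp
next
  case False
  with assms(3) have lam: "lam = neg_part (mu - t)"
    by simp
  with assms(2) have "mu < t"
    by (simp add: neg_part_def)
  with assms(1) lam have "Lclass lam mu sig t \<noteq> {}"
    using mean_var_two_point_in_Lclass_boundary by blast
  moreover have "(\<integral>x. (pos_part (x - t))\<^sup>2 \<partial>F) = 0" if "F \<in> Lclass lam mu sig t" for F
    using Lclass_pos_part_sq_eq_0[OF that assms(2)] lam by simp
  ultimately show ?thesis
    using False by simp
qed

end
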